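(* Let $a\in\mathbb F^*$ and suppose $x^n-a$ lies in the center of $\mathcal R$ (so that $\mathcal S_a$ is a ring). Then $M^\theta_a(\overline{fg})=M^\theta_a(\overline f)\,M^\theta_a(\overline g)$ for all $f,g\in\mathcal R$. Hence $M^\theta_a$ is a ring isomorphism between $\mathcal S_a$ and the subring $M^\theta_a(\mathcal S_a)$ of $\mathbb F^{n\times n}$.
   Context: $\mathbb F$ is a finite field, $\theta\in\mathrm{Aut}(\mathbb F)$, $\mathcal R=\mathbb F[x;\theta]$ the skew polynomial ring (elements $\sum f_ix^i$ with left coefficients, $xb=\theta(b)x$). Fix $n\in\mathbb N$. $\mathcal S_a=\mathcal R/\mathcal R(x^n-a)$, $\overline f$ the coset of $f$. $\mathfrak v_a:\mathcal S_a\to\mathbb F^n$ is the inverse of $(c_0,\dots,c_{n-1})\mapsto\overline{\sum_{i=0}^{n-1}c_ix^i}$. The map $M^\theta_a:\mathcal S_a\to\mathbb F^{n\times n}$ sends $\overline f$ to the matrix whose row with index $i$ ($0\le i\le n-1$) is $\mathfrak v_a(\overline{x^if})$. *)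

theory Defs
  imports "HOL-Computational_Algebra.Polynomial" "Jordan_Normal_Form.Matrix"
begin

text \<open>Skew polynomial ring F[x;theta]: elements are represented by their
  (left) coefficient sequences, i.e. by values of type 'a poly; only the
  multiplication is twisted: (c x^i)(d x^j) = c theta^i(d) x^(i+j).\<close>

definition field_aut :: "('a::field \<Rightarrow> 'a) \<Rightarrow> bool" where
  "field_aut \<theta> \<longleftrightarrow> bij \<theta> \<and> (\<forall>x y. \<theta> (x + y) = \<theta> x + \<theta> y) \<and> (\<forall>x y. \<theta> (x * y) = \<theta> x * \<theta> y)"

definition skew_mult :: "('a::field \<Rightarrow> 'a) \<Rightarrow> 'a poly \<Rightarrow> 'a poly \<Rightarrow> 'a poly" where
  "skew_mult \<theta> f g = (\<Sum>i\<le>degree f. monom (coeff f i) i * map_poly (\<theta> ^^ i) g)"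

definition xn_minus :: "nat \<Rightarrow> 'a::field \<Rightarrow> 'a poly" where
  "xn_minus n a = monom 1 n - [:a:]"

definition skew_central :: "('a::field \<Rightarrow> 'a) \<Rightarrow> 'a poly \<Rightarrow> bool" where
  "skew_central \<theta> c \<longleftrightarrow> (\<forall>g. skew_mult \<theta> g c = skew_mult \<theta> c g)"

text \<open>Congruence modulo the left ideal R(x^n - a): equal cosets in S_a.\<close>
definition skew_cong :: "('a::field \<Rightarrow> 'a) \<Rightarrow> nat \<Rightarrow> 'a \<Rightarrow> 'a poly \<Rightarrow> 'a poly \<Rightarrow> bool" where
  "skew_cong \<theta> n a f g \<longleftrightarrow> (\<exists>h. f - g = skew_mult \<theta> h (xn_minus n a))"

definition poly_of_vec :: "nat \<Rightarrow> 'a::field vec \<Rightarrow> 'a poly" where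
  "poly_of_vec n c = (\<Sum>i<n. monom (c $ i) i)"

definition vvec :: "('a::field \<Rightarrow> 'a) \<Rightarrow> nat \<Rightarrow> 'a \<Rightarrow> 'a poly \<Rightarrow> 'a vec" where
  "vvec \<theta> n a f = (THE c. c \<in> carrier_vec n \<and> skew_cong \<theta> n a (poly_of_vec n c) f)"

definition Mtheta :: "('a::field \<Rightarrow> 'a) \<Rightarrow> nat \<Rightarrow> 'a \<Rightarrow> 'a poly \<Rightarrow> 'a mat" where
  "Mtheta \<theta> n a f = mat n n (\<lambda>(i, j). vvec \<theta> n a (skew_mult \<theta> (monom 1 i) f) $ j)"

end

theory Submission
  imports Defs
begin

text \<open>Every f has a unique representative of degree < n modulo the left ideal R(x^n - a), so v_a is
  well defined, left F-linear and injective on S_a. Its i-th row v_a(x^i f) makes M_a(f) the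
  matrix, acting on row vectors, of right multiplication by f on S_a; this map is well defined
  because x^n - a is central, so R(x^n - a) is a two-sided ideal. Right multiplication by f g is
  right multiplication by f followed by right multiplication by g, whence M_a(f g) = M_a(f) M_a(g).
  The first row of M_a(f) is v_a(f), which gives injectivity.\<close>

locale skew_poly =
  fixes \<theta> :: "'a::field \<Rightarrow> 'a"
  assumes field_aut: "field_aut \<theta>"
begin

lemma aut_add: "\<theta> (x + y) = \<theta> x + \<theta> y" and aut_mult: "\<theta> (x * y) = \<theta> x * \<theta> y"
  using field_aut unfolding field_aut_def by auto

lemma aut_0: "\<theta> 0 = 0"
  using aut_add[of 0 0] by (metis add_cancel_right_right add_0)

lemma aut_1: "\<theta> 1 = 1"
proof -
  have "\<theta> 1 \<noteq> 0"
    using field_aut aut_0 unfolding field_aut_def bij_def inj_def by (metis one_neq_zero)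
  then show ?thesis
    using aut_mult[of 1 1] by (metis mult_cancel_left1)
qed

lemma funpow_aut_add: "(\<theta> ^^ i) (x + y) = (\<theta> ^^ i) x + (\<theta> ^^ i) y"
  by (induct i) (auto simp: aut_add)

lemma funpow_aut_mult: "(\<theta> ^^ i) (x * y) = (\<theta> ^^ i) x * (\<theta> ^^ i) y"
  by (induct i) (auto simp: aut_mult)

lemma funpow_aut_0 [simp]: "(\<theta> ^^ i) 0 = 0"
  by (induct i) (auto simp: aut_0)

lemma funpow_aut_1 [simp]: "(\<theta> ^^ i) 1 = 1"
  by (induct i) (auto simp: aut_1)

lemma coeff_map_poly_funpow_aut [simp]: "coeff (map_poly (\<theta> ^^ i) p) k = (\<theta> ^^ i) (coeff p k)"
  by (rule coeff_map_poly) simp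

lemma map_poly_funpow_aut_add:
  "map_poly (\<theta> ^^ i) (f + g) = map_poly (\<theta> ^^ i) f + map_poly (\<theta> ^^ i) g"
  by (rule poly_eqI) (simp add: funpow_aut_add)

abbreviation skew_times (infixl "\<star>" 70) where "f \<star> g \<equiv> skew_mult \<theta> f g"

lemma skew_mult_altdef:
  "degree f \<le> N \<Longrightarrow> f \<star> g = (\<Sum>i\<le>N. monom (coeff f i) i * map_poly (\<theta> ^^ i) g)"
  unfolding skew_mult_def by (rule sum.mono_neutral_left) (auto simp: coeff_eq_0)

lemma skew_mult_add_left: "(f + g) \<star> h = f \<star> h + g \<star> h"
proof -
  let ?N = "max (degree f) (degree g)"
  have "degree (f + g) \<le> ?N"
    by (simp add: degree_add_le)
  then show ?thesis
    by (simp add: skew_mult_altdef[of f ?N] skew_mult_altdef[of g ?N] skew_mult_altdef[of "f + g" ?N]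
        add_monom[symmetric] distrib_right sum.distrib)
qed

lemma skew_mult_add_right: "h \<star> (f + g) = h \<star> f + h \<star> g"
  unfolding skew_mult_def by (simp add: map_poly_funpow_aut_add distrib_left sum.distrib)

lemma skew_mult_0_left [simp]: "0 \<star> g = 0"
  unfolding skew_mult_def by simp

lemma skew_mult_0_right [simp]: "g \<star> 0 = 0"
  unfolding skew_mult_def by simp

lemma skew_mult_diff_left: "(f - g) \<star> h = f \<star> h - g \<star> h"
  using skew_mult_add_left[of "f - g" g h] by (simp add: algebra_simps)

lemma skew_mult_diff_right: "h \<star> (f - g) = h \<star> f - h \<star> g"
  using skew_mult_add_right[of h "f - g" g] by (simp add: algebra_simps)

lemma skew_mult_minus_left: "(- f) \<star> h = - (f \<star> h)"
  using skew_mult_diff_left[of 0 f h] by simp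

lemma skew_mult_sum_left: "(\<Sum>k\<in>A. F k) \<star> g = (\<Sum>k\<in>A. F k \<star> g)"
  by (induct A rule: infinite_finite_induct) (auto simp: skew_mult_add_left)

lemma skew_mult_sum_right: "g \<star> (\<Sum>k\<in>A. F k) = (\<Sum>k\<in>A. g \<star> F k)"
  by (induct A rule: infinite_finite_induct) (auto simp: skew_mult_add_right)

lemma skew_mult_monom [simp]: "monom b i \<star> monom c j = monom (b * (\<theta> ^^ i) c) (i + j)"
proof -
  have "monom b i \<star> monom c j
      = (\<Sum>k\<le>i. monom (coeff (monom b i) k) k * map_poly (\<theta> ^^ k) (monom c j))"
    by (rule skew_mult_altdef) (simp add: degree_monom_le)
  also have "\<dots> = monom b i * map_poly (\<theta> ^^ i) (monom c j)"
    by (subst sum.remove[of _ i]) (auto simp: coeff_monom intro!: sum.neutral)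
  finally show ?thesis
    by (simp add: map_poly_monom mult_monom)
qed

lemma skew_mult_1_left [simp]: "1 \<star> g = g"
  unfolding skew_mult_def by simp

lemma skew_mult_1_right [simp]: "g \<star> 1 = g"
  unfolding skew_mult_def by (simp add: poly_as_sum_of_monoms)

lemma skew_mult_const_left: "[:c:] \<star> g = Polynomial.smult c g"
  unfolding skew_mult_def by (simp add: monom_0)

text \<open>Associativity is checked on monomials, where it is the identity
  \<open>\<theta>\<^sup>i (c \<theta>\<^sup>j d) = \<theta>\<^sup>i c \<theta>\<^sup>i\<^sup>+\<^sup>j d\<close>, and extended by additivity in each argument in turn.\<close>

lemma skew_mult_assoc_monom_monom:
  "monom b i \<star> (monom c j \<star> h) = (monom b i \<star> monom c j) \<star> h"
proof -
  have "monom b i \<star> (monom c j \<star> (\<Sum>k\<le>degree h. monom (coeff h k) k))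
      = (monom b i \<star> monom c j) \<star> (\<Sum>k\<le>degree h. monom (coeff h k) k)"
    by (simp add: skew_mult_sum_right funpow_aut_mult funpow_add mult.assoc add.assoc)
  then show ?thesis
    by (simp add: poly_as_sum_of_monoms)
qed

lemma skew_mult_assoc_monom: "monom b i \<star> (g \<star> h) = (monom b i \<star> g) \<star> h"
proof -
  have "monom b i \<star> ((\<Sum>k\<le>degree g. monom (coeff g k) k) \<star> h)
      = (monom b i \<star> (\<Sum>k\<le>degree g. monom (coeff g k) k)) \<star> h"
    by (simp add: skew_mult_sum_right skew_mult_sum_left skew_mult_assoc_monom_monom
        del: skew_mult_monom)
  then show ?thesis
    by (simp add: poly_as_sum_of_monoms)
qed

lemma skew_mult_assoc: "f \<star> (g \<star> h) = (f \<star> g) \<star> h"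
proof -
  have "(\<Sum>k\<le>degree f. monom (coeff f k) k) \<star> (g \<star> h)
      = ((\<Sum>k\<le>degree f. monom (coeff f k) k) \<star> g) \<star> h"
    by (simp add: skew_mult_sum_left skew_mult_assoc_monom)
  then show ?thesis
    by (simp add: poly_as_sum_of_monoms)
qed

lemma skew_mult_monom_split: "monom c k \<star> g = [:c:] \<star> (monom 1 k \<star> g)"
  using skew_mult_monom[of c 0 1 k] by (simp add: skew_mult_assoc monom_0)

lemma coeff_skew_mult_const_right: "coeff (h \<star> [:c:]) k = coeff h k * (\<theta> ^^ k) c"
proof -
  have "(\<Sum>i\<le>degree h. monom (coeff h i) i) \<star> monom c 0
      = (\<Sum>i\<le>degree h. monom (coeff h i * (\<theta> ^^ i) c) i)"
    by (simp add: skew_mult_sum_left)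
  then have "h \<star> [:c:] = (\<Sum>i\<le>degree h. monom (coeff h i * (\<theta> ^^ i) c) i)"
    by (simp add: poly_as_sum_of_monoms monom_0)
  then show ?thesis
    by (auto simp: coeff_sum coeff_monom coeff_eq_0)
qed

lemma skew_mult_x_power_right: "h \<star> monom 1 n = monom 1 n * h"
proof -
  have "(\<Sum>i\<le>degree h. monom (coeff h i) i) \<star> monom 1 n
      = monom 1 n * (\<Sum>i\<le>degree h. monom (coeff h i) i)"
    by (simp add: skew_mult_sum_left sum_distrib_left mult_monom add.commute)
  then show ?thesis
    by (simp add: poly_as_sum_of_monoms)
qed

end

locale skew_modulus = skew_poly +
  fixes n :: nat and a :: 'a
begin

abbreviation cong_mod where "cong_mod \<equiv> skew_cong \<theta> n a"

lemma coeff_skew_mult_xn_minus: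
  "coeff (h \<star> xn_minus n a) k = (if n \<le> k then coeff h (k - n) else 0) - coeff h k * (\<theta> ^^ k) a"
  by (simp add: xn_minus_def skew_mult_diff_right coeff_skew_mult_const_right
      skew_mult_x_power_right coeff_monom_mult)

lemma skew_cong_refl: "cong_mod f f"
  unfolding skew_cong_def by (rule exI[of _ 0]) simp

lemma skew_cong_sym: "cong_mod f g \<Longrightarrow> cong_mod g f"
  unfolding skew_cong_def by (metis minus_diff_eq skew_mult_minus_left)

lemma skew_cong_add: "cong_mod f g \<Longrightarrow> cong_mod f' g' \<Longrightarrow> cong_mod (f + f') (g + g')"
  unfolding skew_cong_def
proof (elim exE)
  fix h h' assume "f - g = h \<star> xn_minus n a" "f' - g' = h' \<star> xn_minus n a"
  then have "(f + f') - (g + g') = (h + h') \<star> xn_minus n a"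
    by (simp add: skew_mult_add_left algebra_simps)
  then show "\<exists>h. (f + f') - (g + g') = h \<star> xn_minus n a" ..
qed

lemma skew_cong_trans: "cong_mod f g \<Longrightarrow> cong_mod g k \<Longrightarrow> cong_mod f k"
  using skew_cong_add[of f g g k] skew_cong_add[of "f + g" "g + k" "- g" "- g"] skew_cong_refl
  by simp

lemma skew_cong_sum:
  "(\<And>k. k \<in> A \<Longrightarrow> cong_mod (F k) (G k)) \<Longrightarrow> cong_mod (\<Sum>k\<in>A. F k) (\<Sum>k\<in>A. G k)"
  by (induct A rule: infinite_finite_induct) (auto simp: skew_cong_refl skew_cong_add)

lemma skew_cong_mult_left: "cong_mod f g \<Longrightarrow> cong_mod (k \<star> f) (k \<star> g)"
  unfolding skew_cong_def
proof (elim exE)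
  fix h assume "f - g = h \<star> xn_minus n a"
  then have "k \<star> f - k \<star> g = (k \<star> h) \<star> xn_minus n a"
    by (simp add: skew_mult_diff_right[symmetric] skew_mult_assoc)
  then show "\<exists>h. k \<star> f - k \<star> g = h \<star> xn_minus n a" ..
qed

lemma skew_cong_mult_right:
  assumes "skew_central \<theta> (xn_minus n a)" and "cong_mod f g"
  shows "cong_mod (f \<star> k) (g \<star> k)"
proof -
  obtain h where h: "f - g = h \<star> xn_minus n a"
    using assms(2) unfolding skew_cong_def by blast
  have "f \<star> k - g \<star> k = (h \<star> xn_minus n a) \<star> k"
    by (simp add: h skew_mult_diff_left[symmetric])
  also have "\<dots> = h \<star> (k \<star> xn_minus n a)"
    using assms(1) unfolding skew_central_def by (simp add: skew_mult_assoc)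
  also have "\<dots> = (h \<star> k) \<star> xn_minus n a"
    by (simp add: skew_mult_assoc)
  finally show ?thesis
    unfolding skew_cong_def ..
qed

lemma coeff_poly_of_vec: "coeff (poly_of_vec n c) k = (if k < n then c $ k else 0)"
  unfolding poly_of_vec_def coeff_sum by (simp add: coeff_monom)

lemma poly_of_vec_add:
  "c \<in> carrier_vec n \<Longrightarrow> d \<in> carrier_vec n \<Longrightarrow> poly_of_vec n (c + d) = poly_of_vec n c + poly_of_vec n d"
  by (rule poly_eqI) (simp add: coeff_poly_of_vec)

lemma poly_of_vec_unit_vec: "i < n \<Longrightarrow> poly_of_vec n (unit_vec n i) = monom 1 i"
  by (rule poly_eqI) (auto simp: coeff_poly_of_vec coeff_monom)

lemma poly_of_vec_lincomb:
  "poly_of_vec n (vec n (\<lambda>j. \<Sum>k<n. c $ k * w k $ j)) = (\<Sum>k<n. Polynomial.smult (c $ k) (poly_of_vec n (w k)))"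
  by (rule poly_eqI) (auto simp: coeff_poly_of_vec coeff_sum)

lemma poly_of_vec_skew_mult: "poly_of_vec n c \<star> g = (\<Sum>k<n. [:c $ k:] \<star> (monom 1 k \<star> g))"
  unfolding poly_of_vec_def skew_mult_sum_left by (rule sum.cong[OF refl skew_mult_monom_split])

end

locale skew_residue = skew_modulus +
  assumes n_pos: "n > 0"
begin

lemma reduced_rep_unique:
  assumes "c \<in> carrier_vec n" "d \<in> carrier_vec n"
    and "cong_mod (poly_of_vec n c) f" "cong_mod (poly_of_vec n d) f"
  shows "c = d"
proof -
  obtain h where h: "poly_of_vec n c - poly_of_vec n d = h \<star> xn_minus n a"
    using assms skew_cong_sym skew_cong_trans unfolding skew_cong_def by blast
  have "h = 0"
  proof (rule ccontr)
    assume "h \<noteq> 0"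
    have "coeff (poly_of_vec n c - poly_of_vec n d) (degree h + n) = 0"
      by (simp add: coeff_poly_of_vec)
    moreover have "coeff (h \<star> xn_minus n a) (degree h + n) = lead_coeff h"
      using n_pos by (simp add: coeff_skew_mult_xn_minus coeff_eq_0)
    ultimately show False
      using h \<open>h \<noteq> 0\<close> by simp
  qed
  then have "poly_of_vec n c = poly_of_vec n d"
    using h by simp
  then have "c $ i = d $ i" if "i < n" for i
    using that by (metis coeff_poly_of_vec)
  then show ?thesis
    using assms by (intro eq_vecI) auto
qed

lemma degree_reduction_step:
  assumes "degree f \<ge> n"
  defines "f' \<equiv> f - monom (lead_coeff f) (degree f - n) \<star> xn_minus n a"
  shows "degree f' < degree f"
proof -
  let ?d = "degree f" and ?h = "monom (lead_coeff f) (degree f - n)"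
  have "coeff f' k = 0" if "k \<ge> ?d" for k
  proof -
    have "coeff ?h k = 0" and "coeff ?h (k - n) = (if k = ?d then lead_coeff f else 0)"
      using that assms(1) n_pos by (auto simp: coeff_monom)
    then have "coeff (?h \<star> xn_minus n a) k = (if k = ?d then lead_coeff f else 0)"
      using that assms(1) by (simp only: coeff_skew_mult_xn_minus) simp
    moreover have "coeff f k = (if k = ?d then lead_coeff f else 0)"
      using that by (auto simp: coeff_eq_0)
    ultimately show ?thesis
      unfolding f'_def by simp
  qed
  then have "degree f' \<le> ?d - 1"
    using assms(1) n_pos by (intro degree_le) auto
  then show ?thesis
    using assms(1) n_pos by linarith
qed

lemma reduced_rep_exists: "\<exists>c\<in>carrier_vec n. cong_mod (poly_of_vec n c) f"
proof (induct "degree f" arbitrary: f rule: less_induct)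
  case less
  show ?case
  proof (cases "degree f < n")
    case True
    then have "poly_of_vec n (vec n (coeff f)) = f"
      by (intro poly_eqI) (auto simp: coeff_poly_of_vec coeff_eq_0)
    then show ?thesis
      using skew_cong_refl by (intro bexI[of _ "vec n (coeff f)"]) auto
  next
    case False
    define h where "h = monom (lead_coeff f) (degree f - n)"
    define f' where "f' = f - h \<star> xn_minus n a"
    have "degree f' < degree f"
      using False degree_reduction_step unfolding f'_def h_def by simp
    then obtain c where c: "c \<in> carrier_vec n" "cong_mod (poly_of_vec n c) f'"
      using less by blast
    have "cong_mod f' f"
      unfolding skew_cong_def f'_def by (rule exI[of _ "- h"]) (simp add: skew_mult_minus_left)
    then show ?thesis
      using c skew_cong_trans by blast
  qed
qed

abbreviation v where "v \<equiv> vvec \<theta> n a"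

lemma vvec_spec: "v f \<in> carrier_vec n \<and> cong_mod (poly_of_vec n (v f)) f"
proof -
  have "\<exists>!c. c \<in> carrier_vec n \<and> cong_mod (poly_of_vec n c) f"
    using reduced_rep_exists reduced_rep_unique by blast
  then show ?thesis
    unfolding vvec_def by (rule theI')
qed

lemma dim_vec_vvec [simp]: "dim_vec (v f) = n"
  using vvec_spec[of f] by simp

lemma vvec_eqI: "c \<in> carrier_vec n \<Longrightarrow> cong_mod (poly_of_vec n c) f \<Longrightarrow> v f = c"
  using vvec_spec reduced_rep_unique by blast

lemma vvec_cong: "cong_mod f g \<Longrightarrow> v f = v g"
  using vvec_spec[of f] by (intro vvec_eqI[symmetric]) (auto intro: skew_cong_trans)

lemma vvec_eq_imp_cong: "v f = v g \<Longrightarrow> cong_mod f g"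
  using vvec_spec[of f] vvec_spec[of g] by (metis skew_cong_sym skew_cong_trans)

lemma vvec_add: "v (f + g) = v f + v g"
proof (rule vvec_eqI)
  show "v f + v g \<in> carrier_vec n"
    using vvec_spec[of f] vvec_spec[of g] by auto
  have "cong_mod (poly_of_vec n (v f) + poly_of_vec n (v g)) (f + g)"
    by (rule skew_cong_add) (simp_all add: vvec_spec)
  then show "cong_mod (poly_of_vec n (v f + v g)) (f + g)"
    using vvec_spec[of f] vvec_spec[of g] by (simp add: poly_of_vec_add)
qed

lemma vvec_x_power: "i < n \<Longrightarrow> v (monom 1 i) = unit_vec n i"
  by (rule vvec_eqI) (auto simp: poly_of_vec_unit_vec skew_cong_refl)

text \<open>\<open>v(f g) = v(f) M(g)\<close>: \<open>f\<close> is congruent to \<open>\<Sum>\<^sub>k v(f)\<^sub>k x\<^sup>k\<close>, right multiplication by \<open>g\<close>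
  respects congruence, and \<open>v\<close> is left \<open>F\<close>-linear.\<close>

lemma vvec_skew_mult:
  assumes "skew_central \<theta> (xn_minus n a)"
  shows "v (f \<star> g) = vec n (\<lambda>j. \<Sum>k<n. v f $ k * v (monom 1 k \<star> g) $ j)"
proof (rule vvec_eqI)
  let ?c = "v f" and ?w = "\<lambda>k. v (monom 1 k \<star> g)"
  have "cong_mod (\<Sum>k<n. [:?c $ k:] \<star> poly_of_vec n (?w k)) (\<Sum>k<n. [:?c $ k:] \<star> (monom 1 k \<star> g))"
    by (intro skew_cong_sum skew_cong_mult_left conjunct2[OF vvec_spec])
  also have "(\<Sum>k<n. [:?c $ k:] \<star> (monom 1 k \<star> g)) = poly_of_vec n ?c \<star> g"
    by (simp only: poly_of_vec_skew_mult)
  finally have "cong_mod (poly_of_vec n (vec n (\<lambda>j. \<Sum>k<n. ?c $ k * ?w k $ j))) (poly_of_vec n ?c \<star> g)"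
    by (simp only: poly_of_vec_lincomb skew_mult_const_left)
  moreover have "cong_mod (poly_of_vec n ?c \<star> g) (f \<star> g)"
    using assms by (intro skew_cong_mult_right conjunct2[OF vvec_spec])
  ultimately show "cong_mod (poly_of_vec n (vec n (\<lambda>j. \<Sum>k<n. ?c $ k * ?w k $ j))) (f \<star> g)"
    by (rule skew_cong_trans)
qed simp

abbreviation M where "M \<equiv> Mtheta \<theta> n a"

lemma Mtheta_skew_mult:
  assumes "skew_central \<theta> (xn_minus n a)"
  shows "M (f \<star> g) = M f * M g"
proof (rule eq_matI)
  fix i j assume "i < dim_row (M f * M g)" "j < dim_col (M f * M g)"
  then have ij: "i < n" "j < n"
    by (auto simp: Mtheta_def)
  have "M (f \<star> g) $$ (i, j) = v ((monom 1 i \<star> f) \<star> g) $ j"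
    using ij by (simp add: Mtheta_def skew_mult_assoc)
  also have "\<dots> = (\<Sum>k<n. v (monom 1 i \<star> f) $ k * v (monom 1 k \<star> g) $ j)"
    using ij assms by (simp add: vvec_skew_mult)
  also have "\<dots> = (M f * M g) $$ (i, j)"
    using ij by (simp add: Mtheta_def scalar_prod_def lessThan_atLeast0)
  finally show "M (f \<star> g) $$ (i, j) = (M f * M g) $$ (i, j)" .
qed (auto simp: Mtheta_def)

lemma Mtheta_cong: "cong_mod f g \<Longrightarrow> M f = M g"
  unfolding Mtheta_def by (metis vvec_cong skew_cong_mult_left)

lemma Mtheta_eq_imp_cong:
  assumes "M f = M g"
  shows "cong_mod f g"
proof -
  have "v f $ j = v g $ j" if "j < n" for j
    using that n_pos arg_cong[OF assms, of "\<lambda>A. A $$ (0, j)"] by (simp add: Mtheta_def)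
  then have "v f = v g"
    by (intro eq_vecI) auto
  then show ?thesis
    by (rule vvec_eq_imp_cong)
qed

lemma Mtheta_add: "M (f + g) = M f + M g"
  by (rule eq_matI) (auto simp: Mtheta_def skew_mult_add_right vvec_add)

lemma Mtheta_1: "M 1 = 1\<^sub>m n"
  by (rule eq_matI) (auto simp: Mtheta_def vvec_x_power)

end

theorem theorem3p6:
  fixes \<theta> :: "'a::{finite, field} \<Rightarrow> 'a" and n :: nat and a :: 'a
  assumes "field_aut \<theta>" and "n > 0" and "a \<noteq> 0"
    and "skew_central \<theta> (xn_minus n a)"
  shows "(\<forall>f g. Mtheta \<theta> n a (skew_mult \<theta> f g) = Mtheta \<theta> n a f * Mtheta \<theta> n a g)
    \<and> (\<forall>f g. skew_cong \<theta> n a f g \<longrightarrow> Mtheta \<theta> n a f = Mtheta \<theta> n a g)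
    \<and> (\<forall>f g. Mtheta \<theta> n a f = Mtheta \<theta> n a g \<longrightarrow> skew_cong \<theta> n a f g)
    \<and> (\<forall>f g. Mtheta \<theta> n a (f + g) = Mtheta \<theta> n a f + Mtheta \<theta> n a g)
    \<and> Mtheta \<theta> n a 1 = 1\<^sub>m n"
proof -
  interpret skew_residue \<theta> n a
    using assms by unfold_locales (auto simp: skew_poly_def)
  show ?thesis
    using assms(4) Mtheta_skew_mult Mtheta_cong Mtheta_eq_imp_cong Mtheta_add Mtheta_1 by blast
qed

end
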